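(* Let $n,s$ be integers with $(n+1)/3\le s\le n/2$ and let $L=[s]=\{1,\ldots,s\}$. If $\mathcal{F}\subseteq 2^{[n]}$ is $L$-close Sperner, then $$|\mathcal{F}|\le\sum_{i=3s-n}^{s}\binom{n}{i}.$$
   Context: $[n]=\{1,\ldots,n\}$ and $2^{[n]}$ is the family of all subsets of $[n]$. For a set $L$ of positive integers, $\mathcal{F}\subseteq2^{[n]}$ is $L$-close Sperner if for all distinct $A,B\in\mathcal{F}$, the skew distance $\mathrm{sd}(A,B)=\min\{|A\setminus B|,|B\setminus A|\}$ lies in $L$. *)

theory Defs
  imports Main
begin

definition skew_dist :: "nat set \<Rightarrow> nat set \<Rightarrow> nat" where
  "skew_dist A B = min (card (A - B)) (card (B - A))"

definition close_sperner :: "nat set \<Rightarrow> nat \<Rightarrow> nat set set \<Rightarrow> bool" where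
  "close_sperner L n F \<longleftrightarrow> F \<subseteq> Pow {1..n} \<and>
     (\<forall>A\<in>F. \<forall>B\<in>F. A \<noteq> B \<longrightarrow> skew_dist A B \<in> L)"

end

theory Submission
  imports Defs Complex_Main "HOL-Library.Function_Algebras"
begin

text \<open>
  If the smallest sets of the family have size \<open>k < s\<close>,
  replace them by their upper shadow: as \<open>k + 1 \<le> n - k\<close>, double counting shows that the shadow
  is not smaller, the new family is still an antichain, and a new set \<open>X\<close> has skew distance at
  most \<open>|X| = k + 1 \<le> s\<close> to every other set. Applying this to the family and then to the family
  of complements moves it into the layers \<open>s, \<dots>, n - s\<close> without decreasing its size.

  For \<open>A\<close> in the family let \<open>f\<^sub>A(X) = (|X - A| - 1) \<cdots> (|X - A| - s)\<close> on these layers. It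
  vanishes at every other member \<open>B\<close> with \<open>|B| \<le> |A|\<close>, because then \<open>|B - A|\<close> is the skew
  distance, but not at \<open>A\<close>; so the \<open>f\<^sub>A\<close> are linearly independent. Each \<open>f\<^sub>A\<close> is a multilinear
  polynomial of degree at most \<open>s\<close>, and on the layers \<open>s, \<dots>, n - s\<close> a monomial \<open>x\<^sub>T\<close> with
  \<open>|T| < 3s - n\<close> is a combination of monomials of higher degree, since
  \<open>x\<^sub>T (|X| - s) \<cdots> (|X| - (n - s))\<close> vanishes there. So the size of the family is at most the
  number of monomials of degree between \<open>3s - n\<close> and \<open>s\<close>.
\<close>

lemma skew_dist_commute: "skew_dist A B = skew_dist B A"
  by (simp add: skew_dist_def min.commute)

lemma skew_dist_le_card: "finite A \<Longrightarrow> skew_dist A B \<le> card A"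
  unfolding skew_dist_def by (simp add: card_mono min.coboundedI1)

lemma skew_dist_eq_0_iff:
  assumes "finite A" "finite B"
  shows "skew_dist A B = 0 \<longleftrightarrow> A \<subseteq> B \<or> B \<subseteq> A"
proof -
  have "skew_dist A B = 0 \<longleftrightarrow> card (A - B) = 0 \<or> card (B - A) = 0"
    by (simp add: skew_dist_def min_def) arith
  then show ?thesis
    using assms by auto
qed

lemma skew_dist_eq_card_diff:
  assumes "finite A" "finite B" "card B \<le> card A"
  shows "skew_dist A B = card (B - A)"
proof -
  have "card (B - A) \<le> card (A - B)"
    using assms by (simp add: card_Diff_subset_Int Int_commute card_mono)
  then show ?thesis
    by (simp add: skew_dist_def)
qed

lemma close_sperner_subsetD:
  assumes "close_sperner {1..s} n F" "A \<in> F" "B \<in> F" "A \<subseteq> B"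
  shows "A = B"
proof (rule ccontr)
  assume "A \<noteq> B"
  then have "skew_dist A B \<in> {1..s}"
    using assms(1-3) unfolding close_sperner_def by blast
  moreover have "finite A" "finite B"
    using assms(1-3) by (auto simp: close_sperner_def intro: finite_subset[OF _ finite_atLeastAtMost])
  ultimately show False
    using skew_dist_eq_0_iff assms(4) by fastforce
qed

interpretation real_fun: vector_space "\<lambda>(c::real) (f::'a \<Rightarrow> real) x. c * f x"
  by unfold_locales (auto simp: fun_eq_iff algebra_simps)

lemma sum_fun_apply: "(\<Sum>i\<in>A. f i) x = (\<Sum>i\<in>A. f i x :: 'b::comm_monoid_add)"
  by (induction A rule: infinite_finite_induct) auto

definition layers :: "nat \<Rightarrow> nat \<Rightarrow> nat \<Rightarrow> nat set set" where
  "layers n a b = {X. X \<subseteq> {1..n} \<and> a \<le> card X \<and> card X \<le> b}"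

text \<open>The monomial \<open>x\<^sub>S = \<Prod>\<^sub>i\<^sub>\<in>\<^sub>S x\<^sub>i\<close> evaluated at the characteristic vector of \<open>X\<close>, as a function on \<open>D\<close>.\<close>

definition monomial_on :: "nat set set \<Rightarrow> nat set \<Rightarrow> nat set \<Rightarrow> real" where
  "monomial_on D S X = (if X \<in> D \<and> S \<subseteq> X then 1 else 0)"

abbreviation monomial_span :: "nat set set \<Rightarrow> nat \<Rightarrow> nat \<Rightarrow> nat \<Rightarrow> (nat set \<Rightarrow> real) set" where
  "monomial_span D n a b \<equiv> real_fun.span (monomial_on D ` layers n a b)"

lemma finite_layers: "finite (layers n a b)"
  by (rule finite_subset[of _ "Pow {1..n}"]) (auto simp: layers_def)

lemma card_layers: "card (layers n a b) = (\<Sum>k=a..b. n choose k)"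
proof -
  have "layers n a b = (\<Union>k\<in>{a..b}. {S. S \<subseteq> {1..n} \<and> card S = k})"
    by (auto simp: layers_def)
  also have "card \<dots> = (\<Sum>k=a..b. card {S. S \<subseteq> {1..n} \<and> card S = k})"
    by (rule card_UN_disjoint) auto
  finally show ?thesis
    by (simp add: n_subsets)
qed

lemma monomial_in_monomial_span:
  "S \<subseteq> {1..n} \<Longrightarrow> a \<le> card S \<Longrightarrow> card S \<le> b \<Longrightarrow> monomial_on D S \<in> monomial_span D n a b"
  by (intro real_fun.span_base) (auto simp: layers_def)

lemma monomial_span_mono:
  "a' \<le> a \<Longrightarrow> b \<le> b' \<Longrightarrow> monomial_span D n a b \<subseteq> monomial_span D n a' b'"
  by (intro real_fun.span_mono image_mono) (auto simp: layers_def)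

text \<open>On characteristic vectors \<open>|X \<inter> W| = \<Sum>\<^sub>i\<^sub>\<in>\<^sub>W x\<^sub>i\<close>, and \<open>x\<^sub>i x\<^sub>S = x\<^sub>S\<close> or \<open>x\<^bsub>S \<union> {i}\<^esub>\<close>.\<close>

lemma card_inter_times_monomial:
  assumes "finite W" "finite S"
  shows "(\<lambda>X. real (card (X \<inter> W)) * monomial_on D S X)
    = (\<lambda>X. real (card (S \<inter> W)) * monomial_on D S X) + (\<Sum>i\<in>W - S. monomial_on D (insert i S))"
proof
  fix X
  show "real (card (X \<inter> W)) * monomial_on D S X
    = ((\<lambda>X. real (card (S \<inter> W)) * monomial_on D S X) + (\<Sum>i\<in>W - S. monomial_on D (insert i S))) X"
  proof (cases "X \<in> D \<and> S \<subseteq> X")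
    case True
    have "X \<inter> W = (S \<inter> W) \<union> ((W - S) \<inter> X)"
      using True by auto
    then have "card (X \<inter> W) = card (S \<inter> W) + card ((W - S) \<inter> X)"
      using assms by (simp add: card_Un_disjoint disjoint_iff)
    moreover have "(\<Sum>i\<in>W - S. monomial_on D (insert i S)) X = real (card ((W - S) \<inter> X))"
      using True assms by (simp add: sum_fun_apply monomial_on_def sum.If_cases)
    ultimately show ?thesis
      using True by (simp add: monomial_on_def)
  qed (auto simp: monomial_on_def sum_fun_apply intro!: sum.neutral)
qed

lemma card_inter_times_in_monomial_span:
  assumes W: "W \<subseteq> {1..n}" and g: "g \<in> monomial_span D n a b"
  shows "(\<lambda>X. real (card (X \<inter> W)) * g X) \<in> monomial_span D n a (Suc b)"
  using g
proof (induction rule: real_fun.span_induct)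
  case base
  show ?case
  proof (rule real_fun.subspaceI, goal_cases)
    case 1
    show ?case
      using real_fun.span_zero by (simp add: zero_fun_def)
  next
    case (2 g h)
    then have "(\<lambda>X. real (card (X \<inter> W)) * g X) + (\<lambda>X. real (card (X \<inter> W)) * h X)
        \<in> monomial_span D n a (Suc b)"
      by (intro real_fun.span_add) auto
    then show ?case
      by (simp add: plus_fun_def distrib_left)
  next
    case (3 c g)
    then show ?case
      using real_fun.span_scale[of "\<lambda>X. real (card (X \<inter> W)) * g X" _ c] by (simp add: ac_simps)
  qed
next
  case (step m)
  then obtain S where S: "m = monomial_on D S" "S \<subseteq> {1..n}" "a \<le> card S" "card S \<le> b"
    by (auto simp: layers_def)
  have fin: "finite W" "finite S"
    using W S(2) by (auto intro: finite_subset)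
  have "(\<lambda>X. real (card (S \<inter> W)) * monomial_on D S X) \<in> monomial_span D n a (Suc b)"
    using S by (intro real_fun.span_scale monomial_in_monomial_span) auto
  moreover have "(\<Sum>i\<in>W - S. monomial_on D (insert i S)) \<in> monomial_span D n a (Suc b)"
    using S W fin by (intro real_fun.span_sum monomial_in_monomial_span) auto
  ultimately show ?case
    unfolding S(1) card_inter_times_monomial[OF fin] by (rule real_fun.span_add)
qed

lemma monomial_times_prod_in_monomial_span:
  fixes c :: "nat \<Rightarrow> real"
  assumes W: "W \<subseteq> {1..n}" and T: "T \<subseteq> {1..n}"
  shows "(\<lambda>X. monomial_on D T X * (\<Prod>l<j. real (card (X \<inter> W)) - c l))
      - (\<lambda>X. (\<Prod>l<j. real (card (T \<inter> W)) - c l) * monomial_on D T X)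
    \<in> monomial_span D n (Suc (card T)) (card T + j)"
proof (induction j)
  case 0
  show ?case
    using real_fun.span_zero by (simp add: zero_fun_def fun_diff_def)
next
  case (Suc j)
  let ?m = "monomial_on D T"
  let ?P = "\<Prod>l<j. real (card (T \<inter> W)) - c l"
  define h where "h = (\<lambda>X. ?m X * (\<Prod>l<j. real (card (X \<inter> W)) - c l)) - (\<lambda>X. ?P * ?m X)"
  have fin: "finite W" "finite T"
    using W T by (auto intro: finite_subset)
  have shift: "(\<lambda>X. real (card (X \<inter> W)) * ?m X) - (\<lambda>X. real (card (T \<inter> W)) * ?m X)
      = (\<Sum>i\<in>W - T. monomial_on D (insert i T))"
    using card_inter_times_monomial[OF fin, of D] by (simp add: algebra_simps)
  have h: "h \<in> monomial_span D n (Suc (card T)) (card T + j)"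
    unfolding h_def by (rule Suc.IH)
  have "(\<lambda>X. ?m X * (\<Prod>l<Suc j. real (card (X \<inter> W)) - c l))
      - (\<lambda>X. (\<Prod>l<Suc j. real (card (T \<inter> W)) - c l) * ?m X)
    = ((\<lambda>X. real (card (X \<inter> W)) * h X) - (\<lambda>X. c j * h X))
      + (\<lambda>X. ?P * (\<Sum>i\<in>W - T. monomial_on D (insert i T)) X)"
    unfolding shift[symmetric] by (simp add: h_def fun_eq_iff algebra_simps)
  also have "\<dots> \<in> monomial_span D n (Suc (card T)) (card T + Suc j)"
  proof (intro real_fun.span_add real_fun.span_diff)
    show "(\<lambda>X. real (card (X \<inter> W)) * h X) \<in> monomial_span D n (Suc (card T)) (card T + Suc j)"
      using card_inter_times_in_monomial_span[OF W h] by simp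
    show "(\<lambda>X. c j * h X) \<in> monomial_span D n (Suc (card T)) (card T + Suc j)"
      by (rule subsetD[OF monomial_span_mono real_fun.span_scale[OF h]]) auto
    have sum: "(\<Sum>i\<in>W - T. monomial_on D (insert i T)) \<in> monomial_span D n (Suc (card T)) (Suc (card T))"
      using W T fin by (intro real_fun.span_sum monomial_in_monomial_span) auto
    show "(\<lambda>X. ?P * (\<Sum>i\<in>W - T. monomial_on D (insert i T)) X)
        \<in> monomial_span D n (Suc (card T)) (card T + Suc j)"
      by (rule subsetD[OF monomial_span_mono real_fun.span_scale[OF sum]]) auto
  qed
  finally show ?case .
qed

lemma prod_card_inter_in_monomial_span:
  fixes c :: "nat \<Rightarrow> real"
  assumes "W \<subseteq> {1..n}"
  shows "(\<lambda>X. monomial_on D {} X * (\<Prod>l<j. real (card (X \<inter> W)) - c l)) \<in> monomial_span D n 0 j"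
proof -
  let ?m = "monomial_on D {}"
  let ?P = "\<Prod>l<j. real (card ({} \<inter> W)) - c l"
  have "(\<lambda>X. ?m X * (\<Prod>l<j. real (card (X \<inter> W)) - c l)) - (\<lambda>X. ?P * ?m X) \<in> monomial_span D n 0 j"
    using assms by (intro subsetD[OF monomial_span_mono monomial_times_prod_in_monomial_span]) auto
  moreover have "(\<lambda>X. ?P * ?m X) \<in> monomial_span D n 0 j"
    by (intro real_fun.span_scale monomial_in_monomial_span) auto
  ultimately show ?thesis
    using real_fun.span_add by fastforce
qed

text \<open>On the layers \<open>lo, \<dots>, hi\<close> the product \<open>(|X| - lo) \<cdots> (|X| - hi)\<close> vanishes, while its value at \<open>T\<close> does not.\<close>

lemma monomial_in_higher_monomial_span:
  assumes T: "T \<subseteq> {1..n}" and k: "card T < lo"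
  shows "monomial_on (layers n lo hi) T
    \<in> monomial_span (layers n lo hi) n (Suc (card T)) (card T + Suc (hi - lo))"
proof -
  let ?m = "monomial_on (layers n lo hi) T"
  let ?P = "\<Prod>l<Suc (hi - lo). real (card (T \<inter> {1..n})) - real (lo + l)"
  have vanish: "(\<lambda>X. ?m X * (\<Prod>l<Suc (hi - lo). real (card (X \<inter> {1..n})) - real (lo + l))) = 0"
  proof
    fix X
    show "?m X * (\<Prod>l<Suc (hi - lo). real (card (X \<inter> {1..n})) - real (lo + l)) = 0 X"
    proof (cases "X \<in> layers n lo hi")
      case True
      then have "X \<inter> {1..n} = X" "lo \<le> card X" "card X \<le> hi"
        by (auto simp: layers_def)
      then have "(\<Prod>l<Suc (hi - lo). real (card (X \<inter> {1..n})) - real (lo + l)) = 0"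
        by (intro prod_zero bexI[of _ "card X - lo"]) auto
      then show ?thesis
        by simp
    qed (simp add: monomial_on_def)
  qed
  moreover have "?P \<noteq> 0"
    using T k by (simp add: Int_absorb2)
  moreover have "0 - (\<lambda>X. ?P * ?m X) \<in> monomial_span (layers n lo hi) n (Suc (card T)) (card T + Suc (hi - lo))"
    using monomial_times_prod_in_monomial_span[OF order_refl T,
        where D = "layers n lo hi" and j = "Suc (hi - lo)" and c = "\<lambda>l. real (lo + l)"]
    unfolding vanish .
  ultimately show ?thesis
    using real_fun.span_scale[of "0 - (\<lambda>X. ?P * ?m X)" _ "- 1 / ?P"] by (simp add: fun_eq_iff)
qed

lemma monomial_span_low_degrees:
  "monomial_span (layers n s (s + t)) n 0 s \<subseteq> monomial_span (layers n s (s + t)) n (s - t) s"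
proof (rule real_fun.span_minimal[OF _ real_fun.subspace_span], rule image_subsetI)
  let ?D = "layers n s (s + t)"
  fix T
  assume "T \<in> layers n 0 s"
  then have "T \<subseteq> {1..n}" "card T \<le> s"
    by (auto simp: layers_def)
  then show "monomial_on ?D T \<in> monomial_span ?D n (s - t) s"
  proof (induction "s - card T" arbitrary: T rule: less_induct)
    case less
    show ?case
    proof (cases "s - t \<le> card T")
      case True
      then show ?thesis
        using less.prems by (intro monomial_in_monomial_span) auto
    next
      case False
      have "monomial_span ?D n (Suc (card T)) (card T + Suc t) \<subseteq> monomial_span ?D n (s - t) s"
      proof (rule real_fun.span_minimal[OF _ real_fun.subspace_span], rule image_subsetI)
        fix S
        assume "S \<in> layers n (Suc (card T)) (card T + Suc t)"
        then show "monomial_on ?D S \<in> monomial_span ?D n (s - t) s"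
          using False by (intro less.hyps) (auto simp: layers_def)
      qed
      moreover have "monomial_on ?D T \<in> monomial_span ?D n (Suc (card T)) (card T + Suc t)"
        using monomial_in_higher_monomial_span[OF less.prems(1), of s "s + t"] False by simp
      ultimately show ?thesis
        by blast
    qed
  qed
qed

lemma inj_on_if_triangular:
  fixes f :: "'a \<Rightarrow> 'a \<Rightarrow> real" and r :: "'a \<Rightarrow> nat"
  assumes diag: "\<And>A. A \<in> F \<Longrightarrow> f A A \<noteq> 0"
    and below: "\<And>A B. A \<in> F \<Longrightarrow> B \<in> F \<Longrightarrow> A \<noteq> B \<Longrightarrow> r B \<le> r A \<Longrightarrow> f A B = 0"
  shows "inj_on f F"
proof (rule inj_onI, rule ccontr)
  fix A B
  assume "A \<in> F" "B \<in> F" "f A = f B" "A \<noteq> B"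
  then show False
    using diag below[of A B] below[of B A] by (metis nle_le)
qed

lemma independent_if_triangular:
  fixes f :: "'a \<Rightarrow> 'a \<Rightarrow> real" and r :: "'a \<Rightarrow> nat"
  assumes "finite F"
    and diag: "\<And>A. A \<in> F \<Longrightarrow> f A A \<noteq> 0"
    and below: "\<And>A B. A \<in> F \<Longrightarrow> B \<in> F \<Longrightarrow> A \<noteq> B \<Longrightarrow> r B \<le> r A \<Longrightarrow> f A B = 0"
  shows "real_fun.independent (f ` F)"
proof (rule real_fun.independent_if_scalars_zero)
  show "finite (f ` F)"
    using assms(1) by simp
  have inj: "inj_on f F"
    using diag below by (rule inj_on_if_triangular)
  fix u g
  assume sum0: "(\<Sum>g\<in>f ` F. (\<lambda>X. u g * g X)) = 0" and "g \<in> f ` F"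
  show "u g = 0"
  proof (rule ccontr)
    assume "u g \<noteq> 0"
    then obtain B where B: "B \<in> F" "u (f B) \<noteq> 0"
      and min: "\<And>A. A \<in> F \<Longrightarrow> u (f A) \<noteq> 0 \<Longrightarrow> r B \<le> r A"
      using \<open>g \<in> f ` F\<close> ex_has_least_nat[of "\<lambda>A. A \<in> F \<and> u (f A) \<noteq> 0" _ r] by blast
    have "0 = (\<Sum>A\<in>F. u (f A) * f A B)"
      using fun_cong[OF sum0, of B] by (simp add: sum.reindex[OF inj] sum_fun_apply)
    also have "\<dots> = u (f B) * f B B + (\<Sum>A\<in>F - {B}. u (f A) * f A B)"
      using B assms(1) by (meson sum.remove)
    also have "(\<Sum>A\<in>F - {B}. u (f A) * f A B) = 0"
      using B min below by (intro sum.neutral) fastforce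
    finally show False
      using B diag by simp
  qed
qed

lemma card_le_sum_choose_if_triangular:
  fixes f :: "nat set \<Rightarrow> nat set \<Rightarrow> real" and r :: "nat set \<Rightarrow> nat"
  assumes "finite F"
    and diag: "\<And>A. A \<in> F \<Longrightarrow> f A A \<noteq> 0"
    and below: "\<And>A B. A \<in> F \<Longrightarrow> B \<in> F \<Longrightarrow> A \<noteq> B \<Longrightarrow> r B \<le> r A \<Longrightarrow> f A B = 0"
    and span: "\<And>A. A \<in> F \<Longrightarrow> f A \<in> monomial_span D n a b"
  shows "card F \<le> (\<Sum>k = a..b. n choose k)"
proof -
  have "inj_on f F"
    using diag below by (rule inj_on_if_triangular)
  then have "card F = card (f ` F)"
    by (simp add: card_image)
  also have "\<dots> \<le> card (monomial_on D ` layers n a b)"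
  proof (rule conjunct2[OF real_fun.independent_span_bound])
    show "real_fun.independent (f ` F)"
      using assms(1) diag below by (rule independent_if_triangular)
  qed (use span finite_layers in auto)
  also have "\<dots> \<le> card (layers n a b)"
    by (rule card_image_le[OF finite_layers])
  finally show ?thesis
    by (simp add: card_layers)
qed

lemma card_close_sperner_le_sum_choose:
  assumes cs: "close_sperner {1..s} n F"
    and sizes: "\<And>A. A \<in> F \<Longrightarrow> s \<le> card A \<and> card A \<le> s + t"
  shows "card F \<le> (\<Sum>k = s - t..s. n choose k)"
proof -
  define D where "D = layers n s (s + t)"
  define f where "f A X = (if X \<in> D then \<Prod>l<s. real (card (X - A)) - real (Suc l) else 0)" for A X
  have F: "F \<subseteq> Pow {1..n}" and finF: "finite F"
    using cs by (auto simp: close_sperner_def intro: finite_subset)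
  have fin: "finite A" if "A \<in> F" for A
    using that F finite_subset[of A "{1..n}"] by auto
  have FD: "F \<subseteq> D"
    using F sizes by (auto simp: D_def layers_def)
  have diag: "f A A \<noteq> 0" if "A \<in> F" for A
    using that FD by (auto simp: f_def)
  have below: "f A B = 0" if AB: "A \<in> F" "B \<in> F" "A \<noteq> B" "card B \<le> card A" for A B
  proof -
    have "skew_dist A B \<in> {1..s}"
      using cs AB by (simp add: close_sperner_def)
    moreover have "skew_dist A B = card (B - A)"
      using AB fin by (intro skew_dist_eq_card_diff) auto
    ultimately have "card (B - A) \<in> {1..s}"
      by simp
    then have "(\<Prod>l<s. real (card (B - A)) - real (Suc l)) = 0"
      by (intro prod_zero bexI[of _ "card (B - A) - 1"]) auto
    then show ?thesis
      using FD AB by (auto simp: f_def)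
  qed
  have "f A \<in> monomial_span D n (s - t) s" for A
  proof -
    have "X \<in> D \<Longrightarrow> X \<inter> ({1..n} - A) = X - A" for X
      by (auto simp: D_def layers_def)
    then have "f A = (\<lambda>X. monomial_on D {} X * (\<Prod>l<s. real (card (X \<inter> ({1..n} - A))) - real (Suc l)))"
      by (simp add: f_def monomial_on_def fun_eq_iff)
    also have "\<dots> \<in> monomial_span D n (s - t) s"
      unfolding D_def by (intro subsetD[OF monomial_span_low_degrees prod_card_inter_in_monomial_span]) auto
    finally show ?thesis .
  qed
  with finF diag below show ?thesis
    by (rule card_le_sum_choose_if_triangular)
qed

definition upper_shadow :: "nat \<Rightarrow> nat set set \<Rightarrow> nat set set" where
  "upper_shadow n L = {insert x A | x A. A \<in> L \<and> x \<in> {1..n} - A}"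

lemma sum_card_filter_swap:
  assumes "finite L" "finite N"
  shows "(\<Sum>A\<in>L. card {B \<in> N. R A B}) = (\<Sum>B\<in>N. card {A \<in> L. R A B})"
proof -
  have "(\<Sum>A\<in>L. card {B \<in> N. R A B}) = (\<Sum>A\<in>L. \<Sum>B\<in>N. if R A B then 1 else 0)"
    using assms by (simp add: sum.If_cases Int_def)
  also have "\<dots> = (\<Sum>B\<in>N. \<Sum>A\<in>L. if R A B then 1 else 0)"
    by (rule sum.swap)
  also have "\<dots> = (\<Sum>B\<in>N. card {A \<in> L. R A B})"
    using assms by (simp add: sum.If_cases Int_def)
  finally show ?thesis .
qed

lemma card_subsets_of_card_Suc_le:
  assumes "finite B" and L: "\<And>A. A \<in> L \<Longrightarrow> Suc (card A) = card B"
  shows "card {A \<in> L. A \<subseteq> B} \<le> card B"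
proof -
  have "{A \<in> L. A \<subseteq> B} \<subseteq> (\<lambda>x. B - {x}) ` B"
  proof
    fix A
    assume "A \<in> {A \<in> L. A \<subseteq> B}"
    then have "A \<in> L" "A \<subseteq> B"
      by simp_all
    then have "A \<subseteq> B" "card (B - A) = 1"
      using L[of A] assms(1) by (auto simp: card_Diff_subset finite_subset)
    then show "A \<in> (\<lambda>x. B - {x}) ` B"
      by (auto simp: card_Suc_eq)
  qed
  then have "card {A \<in> L. A \<subseteq> B} \<le> card ((\<lambda>x. B - {x}) ` B)"
    using assms(1) by (intro card_mono) auto
  also have "\<dots> \<le> card B"
    using assms(1) by (rule card_image_le)
  finally show ?thesis .
qed

lemma card_le_card_upper_shadow:
  assumes L: "\<And>A. A \<in> L \<Longrightarrow> A \<subseteq> {1..n} \<and> card A = k" and k: "Suc k \<le> n - k"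
  shows "card L \<le> card (upper_shadow n L)"
proof -
  let ?N = "upper_shadow n L"
  have finL: "finite L"
    using L by (intro finite_subset[of L "Pow {1..n}"]) auto
  have finN: "finite ?N"
    using L by (intro finite_subset[of ?N "Pow {1..n}"]) (auto simp: upper_shadow_def)
  have up: "n - k \<le> card {B \<in> ?N. A \<subseteq> B}" if A: "A \<in> L" for A
  proof -
    have "n - k = card ({1..n} - A)"
      using L[OF A] by (simp add: card_Diff_subset finite_subset[of _ "{1..n}"])
    also have "\<dots> = card ((\<lambda>x. insert x A) ` ({1..n} - A))"
      by (intro card_image[symmetric] inj_onI) (auto simp: insert_ident)
    also have "\<dots> \<le> card {B \<in> ?N. A \<subseteq> B}"
    proof (rule card_mono)
      show "(\<lambda>x. insert x A) ` ({1..n} - A) \<subseteq> {B \<in> ?N. A \<subseteq> B}"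
        unfolding upper_shadow_def using A by blast
    qed (use finN in auto)
    finally show ?thesis .
  qed
  have down: "card {A \<in> L. A \<subseteq> B} \<le> Suc k" if B: "B \<in> ?N" for B
  proof -
    obtain x A where "B = insert x A" "A \<in> L" "x \<in> {1..n} - A"
      using B by (auto simp: upper_shadow_def)
    then have "finite B" "card B = Suc k"
      using L[of A] by (auto simp: finite_subset)
    then show ?thesis
      using card_subsets_of_card_Suc_le[of B L] L by simp
  qed
  have "card L * Suc k \<le> card L * (n - k)"
    using k by (rule mult_le_mono2)
  also have "\<dots> \<le> (\<Sum>A\<in>L. card {B \<in> ?N. A \<subseteq> B})"
    using sum_mono[OF up] by simp
  also have "\<dots> = (\<Sum>B\<in>?N. card {A \<in> L. A \<subseteq> B})"
    using finL finN by (rule sum_card_filter_swap)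
  also have "\<dots> \<le> card ?N * Suc k"
    using sum_mono[OF down] by simp
  finally show ?thesis
    using mult_le_cancel2 by blast
qed

definition push_up :: "nat \<Rightarrow> nat \<Rightarrow> nat set set \<Rightarrow> nat set set" where
  "push_up n k F = {A \<in> F. card A \<noteq> k} \<union> upper_shadow n {A \<in> F. card A = k}"

lemma upper_shadow_layerD:
  assumes "B \<in> upper_shadow n {A \<in> F. card A = k}" and "F \<subseteq> Pow {1..n}"
  shows "B \<subseteq> {1..n}" and "card B = Suc k" and "\<exists>A\<in>F. card A = k \<and> A \<subseteq> B"
proof -
  obtain x A where "B = insert x A" "A \<in> F" "card A = k" "x \<in> {1..n} - A"
    using assms(1) by (auto simp: upper_shadow_def)
  moreover have "finite A"
    using assms(2) \<open>A \<in> F\<close> by (auto intro: finite_subset)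
  ultimately show "B \<subseteq> {1..n}" "card B = Suc k" "\<exists>A\<in>F. card A = k \<and> A \<subseteq> B"
    using assms(2) by auto
qed

lemma push_up_subset_Pow: "F \<subseteq> Pow {1..n} \<Longrightarrow> push_up n k F \<subseteq> Pow {1..n}"
  unfolding push_up_def using upper_shadow_layerD(1) by blast

lemma card_mem_push_up:
  assumes "F \<subseteq> Pow {1..n}" "\<forall>A\<in>F. k \<le> card A \<and> card A \<le> hi" "k < hi"
  shows "\<forall>A\<in>push_up n k F. Suc k \<le> card A \<and> card A \<le> hi"
  using assms upper_shadow_layerD(2)[OF _ assms(1)] by (fastforce simp: push_up_def)

lemma card_le_card_push_up:
  assumes cs: "close_sperner {1..s} n F" and "k < s" "2 * s \<le> n"
  shows "card F \<le> card (push_up n k F)"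
proof -
  let ?L = "{A \<in> F. card A = k}"
  let ?N = "upper_shadow n ?L"
  have F: "F \<subseteq> Pow {1..n}"
    using cs by (simp add: close_sperner_def)
  then have finF: "finite F" and finN: "finite ?N"
    using push_up_subset_Pow[OF F, of k] by (auto simp: push_up_def intro: finite_subset)
  have disjoint: "{A \<in> F. card A \<noteq> k} \<inter> ?N = {}"
  proof (rule equals0I)
    fix B
    assume "B \<in> {A \<in> F. card A \<noteq> k} \<inter> ?N"
    then obtain A where "A \<in> F" "card A = k" "A \<subseteq> B" "B \<in> F" "card B = Suc k"
      using upper_shadow_layerD[OF _ F] by blast
    then show False
      using close_sperner_subsetD[OF cs, of A B] by auto
  qed
  have "card F = card {A \<in> F. card A \<noteq> k} + card ?L"
    using finF by (subst card_Un_disjoint[symmetric]) (auto intro: arg_cong[where f = card])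
  also have "card ?L \<le> card ?N"
    using F assms(2,3) by (intro card_le_card_upper_shadow[where k = k]) auto
  also have "card {A \<in> F. card A \<noteq> k} + card ?N = card (push_up n k F)"
    unfolding push_up_def using finF finN disjoint by (simp add: card_Un_disjoint)
  finally show ?thesis
    by simp
qed

lemma skew_dist_mem_if_incomparable:
  assumes "finite X" "finite Y" "\<not> X \<subseteq> Y" "\<not> Y \<subseteq> X" "card X \<le> s"
  shows "skew_dist X Y \<in> {1..s}"
  using assms skew_dist_eq_0_iff[of X Y] skew_dist_le_card[of X Y] by simp

lemma skew_dist_upper_shadow_push_up:
  assumes cs: "close_sperner {1..s} n F" and "k < s" and sizes: "\<forall>A\<in>F. k \<le> card A"
    and X: "X \<in> upper_shadow n {A \<in> F. card A = k}" and Y: "Y \<in> push_up n k F" "X \<noteq> Y"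
  shows "skew_dist X Y \<in> {1..s}"
proof (rule skew_dist_mem_if_incomparable)
  have F: "F \<subseteq> Pow {1..n}"
    using cs by (simp add: close_sperner_def)
  have "X \<in> push_up n k F"
    using X by (simp add: push_up_def)
  then show "finite X" "finite Y"
    using push_up_subset_Pow[OF F] Y(1) by (auto intro: finite_subset)
  obtain A where A: "A \<in> F" "card A = k" "A \<subseteq> X" and cardX: "card X = Suc k"
    using upper_shadow_layerD[OF X F] by blast
  show "card X \<le> s"
    using cardX assms(2) by simp
  have "card X \<le> card Y"
    using Y(1) upper_shadow_layerD(2)[OF _ F] sizes cardX by (force simp: push_up_def)
  then show "\<not> Y \<subseteq> X"
    using card_seteq[OF \<open>finite X\<close>] Y(2) by blast
  show "\<not> X \<subseteq> Y"
  proof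
    assume XY: "X \<subseteq> Y"
    show False
    proof (cases "Y \<in> F \<and> card Y \<noteq> k")
      case True
      then show False
        using close_sperner_subsetD[OF cs A(1) _ order_trans[OF A(3) XY]] A(2) by blast
    next
      case False
      then have "card Y = Suc k"
        using Y(1) upper_shadow_layerD(2)[OF _ F] by (auto simp: push_up_def)
      then show False
        using XY Y(2) cardX card_subset_eq[OF \<open>finite Y\<close> XY] by simp
    qed
  qed
qed

lemma close_sperner_push_up:
  assumes cs: "close_sperner {1..s} n F" and "k < s" and sizes: "\<forall>A\<in>F. k \<le> card A"
  shows "close_sperner {1..s} n (push_up n k F)"
  unfolding close_sperner_def
proof (intro conjI ballI impI)
  let ?N = "upper_shadow n {A \<in> F. card A = k}"
  show "push_up n k F \<subseteq> Pow {1..n}"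
    using cs unfolding close_sperner_def by (intro push_up_subset_Pow) simp
  fix X Y
  assume XY: "X \<in> push_up n k F" "Y \<in> push_up n k F" "X \<noteq> Y"
  consider "X \<in> ?N" | "Y \<in> ?N" | "X \<in> F" "Y \<in> F"
    using XY(1,2) by (auto simp: push_up_def)
  then show "skew_dist X Y \<in> {1..s}"
  proof cases
    case 1
    then show ?thesis
      using skew_dist_upper_shadow_push_up[OF assms] XY by blast
  next
    case 2
    then show ?thesis
      using skew_dist_upper_shadow_push_up[OF assms, of Y X] XY skew_dist_commute[of X Y] by simp
  next
    case 3
    then show ?thesis
      using cs XY(3) by (simp add: close_sperner_def)
  qed
qed

lemma close_sperner_push_up_to:
  assumes cs: "close_sperner {1..s} n F" and "2 * s \<le> n" "s \<le> hi"
    and "\<forall>A\<in>F. card A \<le> hi" "lo \<le> s"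
  shows "\<exists>G. close_sperner {1..s} n G \<and> card F \<le> card G \<and> (\<forall>A\<in>G. lo \<le> card A \<and> card A \<le> hi)"
  using assms(5)
proof (induction lo)
  case 0
  then show ?case
    using cs assms(4) by blast
next
  case (Suc lo)
  then obtain G where G: "close_sperner {1..s} n G" "card F \<le> card G"
      "\<forall>A\<in>G. lo \<le> card A \<and> card A \<le> hi"
    by auto
  have "lo < s" "lo < hi"
    using Suc.prems assms(3) by auto
  have "close_sperner {1..s} n (push_up n lo G)"
    using G(1) \<open>lo < s\<close> by (rule close_sperner_push_up) (use G(3) in simp)
  moreover have "card G \<le> card (push_up n lo G)"
    using G(1) \<open>lo < s\<close> assms(2) by (rule card_le_card_push_up)
  moreover have "\<forall>A\<in>push_up n lo G. Suc lo \<le> card A \<and> card A \<le> hi"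
    using G \<open>lo < hi\<close> by (intro card_mem_push_up) (simp_all add: close_sperner_def)
  ultimately show ?case
    using G(2) le_trans by blast
qed

lemma close_sperner_image_complement:
  assumes "close_sperner L n F"
  shows "close_sperner L n ((\<lambda>A. {1..n} - A) ` F)"
  unfolding close_sperner_def
proof (intro conjI ballI impI)
  show "(\<lambda>A. {1..n} - A) ` F \<subseteq> Pow {1..n}"
    by auto
  fix X Y
  assume "X \<in> (\<lambda>A. {1..n} - A) ` F" "Y \<in> (\<lambda>A. {1..n} - A) ` F" "X \<noteq> Y"
  then obtain A B where AB: "A \<in> F" "B \<in> F" "X = {1..n} - A" "Y = {1..n} - B" "A \<noteq> B"
    by auto
  then have "X - Y = B - A" "Y - X = A - B"
    using assms by (auto simp: close_sperner_def)
  then have "skew_dist X Y = skew_dist A B"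
    by (simp add: skew_dist_def min.commute)
  then show "skew_dist X Y \<in> L"
    using assms AB by (simp add: close_sperner_def)
qed

lemma card_image_complement:
  assumes "F \<subseteq> Pow {1..n}"
  shows "card ((\<lambda>A. {1..n} - A) ` F) = card F"
  using assms by (intro card_image inj_onI) blast

lemma close_sperner_middle_layers:
  assumes cs: "close_sperner {1..s} n F" and sn: "2 * s \<le> n"
  shows "\<exists>G. close_sperner {1..s} n G \<and> card F \<le> card G \<and> (\<forall>A\<in>G. s \<le> card A \<and> card A \<le> n - s)"
proof -
  have "\<forall>A\<in>F. card A \<le> n"
    using cs by (auto simp: close_sperner_def dest!: card_mono[rotated, OF _ finite_atLeastAtMost])
  then obtain F1 where F1: "close_sperner {1..s} n F1" "card F \<le> card F1" "\<forall>A\<in>F1. s \<le> card A"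
    using close_sperner_push_up_to[OF cs sn, of n s] sn by auto
  let ?G1 = "(\<lambda>A. {1..n} - A) ` F1"
  have F1n: "F1 \<subseteq> Pow {1..n}"
    using F1(1) by (simp add: close_sperner_def)
  have "s \<le> n - s"
    using sn by simp
  have G1_small: "\<forall>A\<in>?G1. card A \<le> n - s"
  proof
    fix X
    assume "X \<in> ?G1"
    then obtain A where "A \<in> F1" "X = {1..n} - A"
      by blast
    moreover have "finite A" "A \<subseteq> {1..n}"
      using F1n \<open>A \<in> F1\<close> by (auto intro: finite_subset)
    ultimately show "card X \<le> n - s"
      using F1(3) by (simp add: card_Diff_subset diff_le_mono2)
  qed
  then obtain G where "close_sperner {1..s} n G" "card ?G1 \<le> card G"
      "\<forall>A\<in>G. s \<le> card A \<and> card A \<le> n - s"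
    using close_sperner_push_up_to[OF close_sperner_image_complement[OF F1(1)] sn
        \<open>s \<le> n - s\<close> G1_small order_refl]
    by fastforce
  then show ?thesis
    using F1(2) card_image_complement[OF F1n] by auto
qed

theorem mainTheorem6:
  fixes n s :: nat and F :: "nat set set"
  assumes "n + 1 \<le> 3 * s" and "2 * s \<le> n"
    and "close_sperner {1..s} n F"
  shows "card F \<le> (\<Sum>i = 3 * s - n..s. n choose i)"
proof -
  obtain G where G: "close_sperner {1..s} n G" "card F \<le> card G"
      "\<forall>A\<in>G. s \<le> card A \<and> card A \<le> s + (n - 2 * s)"
    using close_sperner_middle_layers[OF assms(3,2)] assms(2) by fastforce
  have "card G \<le> (\<Sum>i = s - (n - 2 * s)..s. n choose i)"
    using card_close_sperner_le_sum_choose[OF G(1)] G(3) by blast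
  moreover have "s - (n - 2 * s) = 3 * s - n"
    using assms(2) by simp
  ultimately show ?thesis
    using G(2) by simp
qed

end
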